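(* Let $c_{\min}\le c_{\max}$ and $d_{\min}\le d_{\max}$ be integers, $T=\{c_{\min},\dots,c_{\max}\}\times\{d_{\min},\dots,d_{\max}\}$, $a:T\to[0,1]$ and $p:T\to\mathbb{R}$. For $(c,d),(c',d')\in T$ write $(c,d)\to(c',d')$ for the inequality $p_{c,d}-c\,a_{c,d}\ge p_{c',d'}-c\,a_{c',d'}$. Assume $a$ is monotonic: $a_{c,d}\ge a_{c',d'}$ whenever $c\le c'$ and $d\ge d'$. Suppose that for every $(c,d)\in T$ the adjacent constraints hold: $(c,d)\to(c+1,d)$ if $c<c_{\max}$, $(c,d)\to(c-1,d)$ if $c>c_{\min}$, and $(c,d)\to(c,d-1)$ if $d>d_{\min}$. Then for every $(c,d)\in T$: $(c,d)\to(c',d)$ holds for every $c'\in\{c_{\min},\dots,c_{\max}\}$, and $(c,d)\to(c,d')$ holds for every $d'\in\{d_{\min},\dots,d\}$.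
   Context: $a_{c,d}$ is the interim winning probability and $p_{c,d}$ the expected payment of a bidder reporting type $(c,d)$ (cost $c$, predicted path duration $d$); a bidder of true cost $c$ winning with probability $a$ has expected cost $c\,a$. The inequality $(c,d)\to(c',d')$ is the incentive-compatibility constraint for a bidder of true type $(c,d)$ misreporting $(c',d')$. The "adjacent" constraints are those where the report differs from the true type by one unit in one coordinate. *)

theory Defs
  imports Complex_Main
begin

text \<open>IC constraint: a bidder of true type (c,d) does not gain by reporting (c',d').\<close>
definition ic :: "(int \<Rightarrow> int \<Rightarrow> real) \<Rightarrow> (int \<Rightarrow> int \<Rightarrow> real) \<Rightarrow> int \<Rightarrow> int \<Rightarrow> int \<Rightarrow> int \<Rightarrow> bool" where
  "ic a p c d c' d' \<longleftrightarrow> p c d - of_int c * a c d \<ge> p c' d' - of_int c * a c' d'"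

end

theory Submission
  imports Defs
begin

text \<open>IC constraints compose along a path of reports provided the allocation does not move
  with the change of true cost at each intermediate report; for a fixed true cost they compose
  unconditionally. Monotonicity of the allocation provides this along each row, and the downward
  constraints in the duration all keep the true cost.\<close>

lemma ic_refl: "ic a p c d c d"
  unfolding ic_def by simp

text \<open>The side condition is the gap between the two constraints of type \<open>(c, d)\<close> and of
  the intermediate type \<open>(c', d')\<close>: the latter is stated with true cost \<open>c'\<close> instead of \<open>c\<close>.\<close>

lemma ic_trans:
  assumes "ic a p c d c' d'" and "ic a p c' d' c'' d''"
    and "(of_int c' - of_int c) * (a c'' d'' - a c' d') \<le> 0"
  shows "ic a p c d c'' d''"
  using assms unfolding ic_def by (simp add: algebra_simps)

lemma ic_trans_same_cost:
  "ic a p c d c d' \<Longrightarrow> ic a p c d' c d'' \<Longrightarrow> ic a p c d c d''"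
  by (rule ic_trans) auto

lemma ic_chain_cost_up:
  assumes "c \<le> c'"
    and "\<And>k. c \<le> k \<Longrightarrow> k < c' \<Longrightarrow> ic a p k d (k + 1) d \<and> a (k + 1) d \<le> a k d"
  shows "ic a p c d c' d"
  using assms
proof (induction c' rule: int_ge_induct)
  case base
  show ?case by (rule ic_refl)
next
  case (step k)
  from step.IH step.prems have "ic a p c d k d" by simp
  moreover from step.hyps step.prems have "ic a p k d (k + 1) d" by simp
  moreover from step.hyps step.prems have "(of_int k - of_int c) * (a (k + 1) d - a k d) \<le> 0"
    by (intro mult_nonneg_nonpos) simp_all
  ultimately show ?case by (rule ic_trans)
qed

lemma ic_chain_cost_down:
  assumes "c' \<le> c"
    and "\<And>k. c' < k \<Longrightarrow> k \<le> c \<Longrightarrow> ic a p k d (k - 1) d \<and> a k d \<le> a (k - 1) d"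
  shows "ic a p c d c' d"
  using assms
proof (induction c' rule: int_le_induct)
  case base
  show ?case by (rule ic_refl)
next
  case (step k)
  from step.IH step.prems have "ic a p c d k d" by simp
  moreover from step.hyps step.prems have "ic a p k d (k - 1) d" by simp
  moreover from step.hyps step.prems have "(of_int k - of_int c) * (a (k - 1) d - a k d) \<le> 0"
    by (intro mult_nonpos_nonneg) simp_all
  ultimately show ?case by (rule ic_trans)
qed

lemma ic_chain_duration_down:
  assumes "d' \<le> d" and "\<And>k. d' < k \<Longrightarrow> k \<le> d \<Longrightarrow> ic a p c k c (k - 1)"
  shows "ic a p c d c d'"
  using assms
proof (induction d' rule: int_le_induct)
  case base
  show ?case by (rule ic_refl)
next
  case (step k)
  have "ic a p c d c k" using step.IH step.prems by simp
  moreover have "ic a p c k c (k - 1)" using step.hyps step.prems by simp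
  ultimately show ?case by (rule ic_trans_same_cost)
qed

theorem lemma2:
  fixes cmin cmax dmin dmax :: int
    and a p :: "int \<Rightarrow> int \<Rightarrow> real"
  assumes "cmin \<le> cmax" and "dmin \<le> dmax"
    and a_range: "\<And>c d. c \<in> {cmin..cmax} \<Longrightarrow> d \<in> {dmin..dmax} \<Longrightarrow> 0 \<le> a c d \<and> a c d \<le> 1"
    and mono: "\<And>c d c' d'. c \<in> {cmin..cmax} \<Longrightarrow> d \<in> {dmin..dmax} \<Longrightarrow>
                 c' \<in> {cmin..cmax} \<Longrightarrow> d' \<in> {dmin..dmax} \<Longrightarrow>
                 c \<le> c' \<Longrightarrow> d' \<le> d \<Longrightarrow> a c' d' \<le> a c d"
    and up: "\<And>c d. c \<in> {cmin..cmax} \<Longrightarrow> d \<in> {dmin..dmax} \<Longrightarrow> c < cmax \<Longrightarrow> ic a p c d (c + 1) d"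
    and down: "\<And>c d. c \<in> {cmin..cmax} \<Longrightarrow> d \<in> {dmin..dmax} \<Longrightarrow> c > cmin \<Longrightarrow> ic a p c d (c - 1) d"
    and dlow: "\<And>c d. c \<in> {cmin..cmax} \<Longrightarrow> d \<in> {dmin..dmax} \<Longrightarrow> d > dmin \<Longrightarrow> ic a p c d c (d - 1)"
  shows "\<forall>c \<in> {cmin..cmax}. \<forall>d \<in> {dmin..dmax}.
           (\<forall>c' \<in> {cmin..cmax}. ic a p c d c' d) \<and> (\<forall>d' \<in> {dmin..d}. ic a p c d c d')"
proof (intro ballI conjI)
  fix c d c' d'
  assume c: "c \<in> {cmin..cmax}" and d: "d \<in> {dmin..dmax}"
  show "ic a p c d c' d" if c': "c' \<in> {cmin..cmax}"
  proof (cases "c \<le> c'")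
    case True
    show ?thesis
    proof (rule ic_chain_cost_up[OF True])
      fix k assume "c \<le> k" "k < c'"
      then have k: "k \<in> {cmin..cmax}" "k + 1 \<in> {cmin..cmax}" and "k < cmax"
        using c c' by auto
      show "ic a p k d (k + 1) d \<and> a (k + 1) d \<le> a k d"
        using up[OF k(1) d \<open>k < cmax\<close>] mono[OF k(1) d k(2) d] by simp
    qed
  next
    case False
    show ?thesis
    proof (rule ic_chain_cost_down)
      show "c' \<le> c" using False by simp
      fix k assume "c' < k" "k \<le> c"
      then have k: "k \<in> {cmin..cmax}" "k - 1 \<in> {cmin..cmax}" and "cmin < k"
        using c c' by auto
      show "ic a p k d (k - 1) d \<and> a k d \<le> a (k - 1) d"
        using down[OF k(1) d \<open>cmin < k\<close>] mono[OF k(2) d k(1) d] by simp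
    qed
  qed
  show "ic a p c d c d'" if d': "d' \<in> {dmin..d}"
  proof (rule ic_chain_duration_down)
    show "d' \<le> d" using d' by simp
    fix k assume "d' < k" "k \<le> d"
    then have "k \<in> {dmin..dmax}" and "dmin < k" using d d' by auto
    then show "ic a p c k c (k - 1)" using dlow[OF c] by simp
  qed
qed

end
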